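(* Let $\kappa\in[0,1)$, let $(Q_n)_{n\ge0}$ be $\kappa$-strict pseudocontractions $\mathcal H\to\mathcal H$ with $\mathrm{Fix}(Q_n)=F$ for all $n$ (a set independent of $n$), and let $\alpha_n\in(\kappa,1)$. Assume that for every subsequence $(\sigma(n))$ there are a further subsequence $(\mu(n))$ and a $\kappa$-strict pseudocontraction $Q:\mathcal H\to\mathcal H$ with $\mathrm{Fix}(Q)=F$ such that $Q_{\mu(n)}\to Q$ uniformly on bounded subsets of $\mathcal H$. Let $T_n x=\frac{x+R_nx}{2}+\frac12\big(\frac{\kappa-\alpha_n}{1-\alpha_n}\big)(x-R_nx)$ with $R_nx=\alpha_nx+(1-\alpha_n)Q_nx$. Then $(T_n)_{n\ge0}$ is coherent: for every bounded sequence $(z_n)_{n\ge0}$ in $\mathcal H$ with $\sum_n\|z_{n+1}-z_n\|^2<\infty$ and $\sum_n\|z_n-T_nz_n\|^2<\infty$, every weak cluster point of $(z_n)$ belongs to $\bigcap_{n\ge0}\mathrm{Fix}(T_n)$ $(=F)$.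
   Context: A map $Q:\mathcal H\to\mathcal H$ is a $\kappa$-strict pseudocontraction ($0\le\kappa<1$) if $\|Qx-Qy\|^2\le\|x-y\|^2+\kappa\|(I-Q)x-(I-Q)y\|^2$ for all $x,y$. $\mathrm{Fix}(T)=\{x:Tx=x\}$. $\mathcal H$ is a real Hilbert space. *)

theory Defs
  imports "HOL-Analysis.Analysis"
begin

definition strict_pseudocontraction :: "real \<Rightarrow> ('a::real_inner \<Rightarrow> 'a) \<Rightarrow> bool" where
  "strict_pseudocontraction \<kappa> Q \<longleftrightarrow> 0 \<le> \<kappa> \<and> \<kappa> < 1 \<and>
     (\<forall>x y. (norm (Q x - Q y))\<^sup>2 \<le> (norm (x - y))\<^sup>2 + \<kappa> * (norm ((x - Q x) - (y - Q y)))\<^sup>2)"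

definition Fix :: "('a \<Rightarrow> 'a) \<Rightarrow> 'a set" where
  "Fix T = {x. T x = x}"

definition weakly_converges_to :: "(nat \<Rightarrow> 'a::real_inner) \<Rightarrow> 'a \<Rightarrow> bool" where
  "weakly_converges_to z x \<longleftrightarrow> (\<forall>y. (\<lambda>n. inner (z n) y) \<longlonglongrightarrow> inner x y)"

definition weak_cluster_point :: "(nat \<Rightarrow> 'a::real_inner) \<Rightarrow> 'a \<Rightarrow> bool" where
  "weak_cluster_point z x \<longleftrightarrow> (\<exists>r. strict_mono r \<and> weakly_converges_to (z \<circ> r) x)"

end

theory Submission
  imports Defs
begin

text \<open>
  Writing \<open>c = (1 - \<kappa>)/2\<close>, the operator \<open>T n\<close> simplifies to the
  relaxation \<open>T n u = u - c (u - Q n u)\<close>; in particular \<open>Fix (T n) = Fix (Q n) = F\<close>.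
  Let \<open>z\<close> be bounded with square-summable residuals \<open>z n - T n (z n)\<close>, and let
  \<open>z \<circ> r\<close> converge weakly to \<open>x\<close>.  The residuals tend to \<open>0\<close>, hence so do
  \<open>z n - Q n (z n)\<close>.  The hypothesis yields a further subsequence \<open>\<mu>\<close> along which
  \<open>Q (r (\<mu> n))\<close> converges uniformly on the bounded set \<open>range z\<close> to a
  \<open>\<kappa>\<close>-strict pseudocontraction \<open>Q'\<close> with \<open>Fix Q' = F\<close>; so \<open>w = z \<circ> r \<circ> \<mu>\<close>
  satisfies \<open>w k - Q' (w k) \<rightarrow> 0\<close> and \<open>w\<close> converges weakly to \<open>x\<close>.  The
  demiclosedness principle for strict pseudocontractions (proved from the
  cocoercivity of \<open>I - Q'\<close>) then gives \<open>x \<in> Fix Q' = F\<close>.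
\<close>

lemma inner_Bseq_null:
  fixes f g :: "nat \<Rightarrow> 'a::real_inner"
  assumes "Bseq f" and "g \<longlonglongrightarrow> 0"
  shows "(\<lambda>n. inner (f n) (g n)) \<longlonglongrightarrow> 0"
  using bounded_bilinear.Bfun_prod_Zfun[OF bounded_bilinear_inner assms(1)] assms(2)
  by (simp add: tendsto_Zfun_iff)

lemma square_summable_tendsto_zero:
  fixes f :: "nat \<Rightarrow> 'a::real_normed_vector"
  assumes "summable (\<lambda>n. (norm (f n))\<^sup>2)"
  shows "f \<longlonglongrightarrow> 0"
proof -
  have "(\<lambda>n. (norm (f n))\<^sup>2) \<longlonglongrightarrow> 0"
    using assms by (rule summable_LIMSEQ_zero)
  then have "(\<lambda>n. sqrt ((norm (f n))\<^sup>2)) \<longlonglongrightarrow> sqrt 0"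
    by (rule tendsto_real_sqrt)
  then have "(\<lambda>n. norm (f n)) \<longlonglongrightarrow> 0"
    by simp
  then show ?thesis
    by (rule tendsto_norm_zero_cancel)
qed

lemma uniform_limit_along_sequence:
  fixes f :: "nat \<Rightarrow> 'a \<Rightarrow> 'b::real_normed_vector"
  assumes "uniform_limit (range w) f g sequentially"
  shows "(\<lambda>n. f n (w n) - g (w n)) \<longlonglongrightarrow> 0"
proof (rule LIMSEQ_I)
  fix e :: real
  assume "0 < e"
  then obtain N where "\<And>n. n \<ge> N \<Longrightarrow> \<forall>y\<in>range w. dist (f n y) (g y) < e"
    using uniform_limitD[OF assms] unfolding eventually_sequentially by blast
  then show "\<exists>N. \<forall>n\<ge>N. norm (f n (w n) - g (w n) - 0) < e"
    by (auto simp: dist_norm)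
qed

lemma weakly_converges_to_subseq:
  assumes "weakly_converges_to z x" and "strict_mono \<mu>"
  shows "weakly_converges_to (z \<circ> \<mu>) x"
  using assms LIMSEQ_subseq_LIMSEQ
  unfolding weakly_converges_to_def by (fastforce simp: o_def)

text \<open>This is the defining inequality rewritten by
  expanding \<open>\<parallel>(u - v) - ((I - Q) u - (I - Q) v)\<parallel>\<^sup>2\<close>.\<close>
lemma strict_pseudocontraction_cocoercive:
  assumes "strict_pseudocontraction \<kappa> Q"
  shows "(1 - \<kappa>) / 2 * (norm ((u - Q u) - (v - Q v)))\<^sup>2 \<le> inner (u - v) ((u - Q u) - (v - Q v))"
proof -
  define a where "a = u - v"
  define b where "b = (u - Q u) - (v - Q v)"
  have "Q u - Q v = a - b"
    unfolding a_def b_def by (simp add: algebra_simps)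
  then have spc: "(norm (a - b))\<^sup>2 \<le> (norm a)\<^sup>2 + \<kappa> * (norm b)\<^sup>2"
    using assms unfolding strict_pseudocontraction_def a_def b_def by metis
  have "(norm (a - b))\<^sup>2 = (norm a)\<^sup>2 - 2 * inner a b + (norm b)\<^sup>2"
    by (simp add: power2_norm_eq_inner inner_diff_left inner_diff_right inner_commute)
  with spc show ?thesis
    unfolding a_def[symmetric] b_def[symmetric] by (simp add: algebra_simps)
qed

text \<open>Passing to the
  limit in the cocoercivity inequality between \<open>w k\<close> and \<open>x\<close> gives
  \<open>(1 - \<kappa>)/2 \<parallel>x - Q x\<parallel>\<^sup>2 \<le> 0\<close>.\<close>
lemma strict_pseudocontraction_demiclosed:
  fixes w :: "nat \<Rightarrow> 'a::real_inner"
  assumes sp: "strict_pseudocontraction \<kappa> Q"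
    and bounded: "bounded (range w)"
    and residual: "(\<lambda>k. w k - Q (w k)) \<longlonglongrightarrow> 0"
    and weak: "weakly_converges_to w x"
  shows "x \<in> Fix Q"
proof -
  define A where "A u = u - Q u" for u
  have residual_A: "(\<lambda>k. A (w k)) \<longlonglongrightarrow> 0"
    using residual unfolding A_def .
  have cocoercive: "(1 - \<kappa>) / 2 * (norm (A (w k) - A x))\<^sup>2 \<le> inner (w k - x) (A (w k) - A x)" for k
    unfolding A_def by (rule strict_pseudocontraction_cocoercive[OF sp])
  have lhs: "(\<lambda>k. (1 - \<kappa>) / 2 * (norm (A (w k) - A x))\<^sup>2) \<longlonglongrightarrow> (1 - \<kappa>) / 2 * (norm (0 - A x))\<^sup>2"
    by (intro tendsto_intros residual_A)
  have "Bseq (\<lambda>k. w k - x)"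
    using Bseq_add[of w "- x"] bounded by (simp add: Bseq_eq_bounded)
  then have null_part: "(\<lambda>k. inner (w k - x) (A (w k))) \<longlonglongrightarrow> 0"
    using inner_Bseq_null residual_A by blast
  have "(\<lambda>k. inner (w k) (A x)) \<longlonglongrightarrow> inner x (A x)"
    using weak unfolding weakly_converges_to_def by blast
  then have weak_part: "(\<lambda>k. inner (w k - x) (A x)) \<longlonglongrightarrow> 0"
    by (simp add: inner_diff_left LIM_zero)
  have rhs: "(\<lambda>k. inner (w k - x) (A (w k) - A x)) \<longlonglongrightarrow> 0"
    using tendsto_diff[OF null_part weak_part] by (simp add: inner_diff_right)
  have "(1 - \<kappa>) / 2 * (norm (0 - A x))\<^sup>2 \<le> 0"
    by (rule LIMSEQ_le[OF lhs rhs]) (use cocoercive in auto)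
  moreover have "(1 - \<kappa>) / 2 > 0"
    using sp unfolding strict_pseudocontraction_def by simp
  ultimately have "(norm (A x))\<^sup>2 \<le> 0"
    by (simp add: mult_le_0_iff)
  then show ?thesis
    unfolding Fix_def A_def by simp
qed

lemma relaxation_formula:
  fixes Q :: "'a::real_vector \<Rightarrow> 'a" and u :: 'a
  assumes "\<alpha> \<noteq> 1"
  defines "R \<equiv> \<alpha> *\<^sub>R u + (1 - \<alpha>) *\<^sub>R Q u"
  shows "(1/2) *\<^sub>R (u + R) + ((1/2) * ((\<kappa> - \<alpha>) / (1 - \<alpha>))) *\<^sub>R (u - R)
           = u - ((1 - \<kappa>) / 2) *\<^sub>R (u - Q u)"
proof -
  define v where "v = u - Q u"
  define k where "k = (1/2) * ((\<kappa> - \<alpha>) / (1 - \<alpha>))"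
  have diff: "u - R = (1 - \<alpha>) *\<^sub>R v" and sum: "u + R = 2 *\<^sub>R u - (1 - \<alpha>) *\<^sub>R v"
    unfolding R_def v_def by (simp_all add: algebra_simps scaleR_2)
  have "(1/2) *\<^sub>R (u + R) + k *\<^sub>R (u - R) = u + (k * (1 - \<alpha>) - (1/2) * (1 - \<alpha>)) *\<^sub>R v"
    unfolding diff sum by (simp add: algebra_simps diff_divide_distrib)
  also have "k * (1 - \<alpha>) - (1/2) * (1 - \<alpha>) = - ((1 - \<kappa>) / 2)"
    using assms unfolding k_def by (simp add: field_simps)
  finally show ?thesis
    unfolding k_def v_def by simp
qed

lemma Fix_relaxation:
  assumes "c \<noteq> 0"
  shows "Fix (\<lambda>u::'a::real_vector. u - c *\<^sub>R (u - Q u)) = Fix Q"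
  using assms unfolding Fix_def by auto

theorem lemma4:
  fixes \<kappa> :: real
    and Q :: "nat \<Rightarrow> 'a::{real_inner,complete_space} \<Rightarrow> 'a"
    and F :: "'a set"
    and \<alpha> :: "nat \<Rightarrow> real"
    and R T :: "nat \<Rightarrow> 'a \<Rightarrow> 'a"
  assumes kappa: "0 \<le> \<kappa>" "\<kappa> < 1"
    and Qn: "\<And>n. strict_pseudocontraction \<kappa> (Q n)"
    and FixQ: "\<And>n. Fix (Q n) = F"
    and alpha: "\<And>n. \<kappa> < \<alpha> n \<and> \<alpha> n < 1"
    and subseq: "\<And>\<sigma> :: nat \<Rightarrow> nat. strict_mono \<sigma> \<Longrightarrow>
        \<exists>(\<mu> :: nat \<Rightarrow> nat) Q'. strict_mono \<mu> \<and> strict_pseudocontraction \<kappa> Q' \<and> Fix Q' = F \<and>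
          (\<forall>B. bounded B \<longrightarrow> uniform_limit B (\<lambda>n. Q (\<sigma> (\<mu> n))) Q' sequentially)"
    and R_def: "\<And>n x. R n x = \<alpha> n *\<^sub>R x + (1 - \<alpha> n) *\<^sub>R Q n x"
    and T_def: "\<And>n x. T n x = (1/2) *\<^sub>R (x + R n x)
                   + ((1/2) * ((\<kappa> - \<alpha> n) / (1 - \<alpha> n))) *\<^sub>R (x - R n x)"
  shows "\<forall>z :: nat \<Rightarrow> 'a. bounded (range z)
           \<and> summable (\<lambda>n. (norm (z (Suc n) - z n))\<^sup>2)
           \<and> summable (\<lambda>n. (norm (z n - T n (z n)))\<^sup>2)
           \<longrightarrow> (\<forall>x. weak_cluster_point z x \<longrightarrow> x \<in> (\<Inter>n. Fix (T n)))"
proof (intro allI impI)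
  define c where "c = (1 - \<kappa>) / 2"
  have c: "c \<noteq> 0"
    using kappa unfolding c_def by simp
  have T_relax: "T n = (\<lambda>u. u - c *\<^sub>R (u - Q n u))" for n
  proof
    fix u
    show "T n u = u - c *\<^sub>R (u - Q n u)"
      unfolding T_def R_def c_def by (rule relaxation_formula) (use alpha[of n] in auto)
  qed
  fix z :: "nat \<Rightarrow> 'a" and x
  assume z: "bounded (range z) \<and> summable (\<lambda>n. (norm (z (Suc n) - z n))\<^sup>2)
               \<and> summable (\<lambda>n. (norm (z n - T n (z n)))\<^sup>2)"
    and "weak_cluster_point z x"
  then obtain r where r: "strict_mono r" and weak_r: "weakly_converges_to (z \<circ> r) x"
    unfolding weak_cluster_point_def by auto
  obtain \<mu> Q' where \<mu>: "strict_mono \<mu>" and Q': "strict_pseudocontraction \<kappa> Q'" "Fix Q' = F"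
    and unif: "uniform_limit (range z) (\<lambda>n. Q (r (\<mu> n))) Q' sequentially"
    using subseq[OF r] z by blast
  define w where "w = z \<circ> r \<circ> \<mu>"
  have "(\<lambda>n. z n - T n (z n)) \<longlonglongrightarrow> 0"
    using z by (blast intro: square_summable_tendsto_zero)
  from tendsto_scaleR[OF tendsto_const this, of "1 / c"]
  have "(\<lambda>n. z n - Q n (z n)) \<longlonglongrightarrow> 0"
    using c by (simp add: T_relax)
  from LIMSEQ_subseq_LIMSEQ[OF this strict_mono_o[OF r \<mu>]]
  have residual_Qn: "(\<lambda>k. w k - Q (r (\<mu> k)) (w k)) \<longlonglongrightarrow> 0"
    unfolding w_def o_def .
  have "range w \<subseteq> range z"
    unfolding w_def by auto
  from uniform_limit_along_sequence[OF uniform_limit_on_subset[OF unif this]]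
  have approx_Q': "(\<lambda>k. Q (r (\<mu> k)) (w k) - Q' (w k)) \<longlonglongrightarrow> 0" .
  have "(\<lambda>k. w k - Q' (w k)) \<longlonglongrightarrow> 0"
    using tendsto_add[OF residual_Qn approx_Q'] by simp
  moreover have "bounded (range w)"
    using z \<open>range w \<subseteq> range z\<close> bounded_subset by blast
  moreover have "weakly_converges_to w x"
    unfolding w_def by (rule weakly_converges_to_subseq[OF weak_r \<mu>])
  ultimately have "x \<in> F"
    using strict_pseudocontraction_demiclosed[OF Q'(1)] Q'(2) by blast
  then show "x \<in> (\<Inter>n. Fix (T n))"
    using FixQ c by (simp add: T_relax Fix_relaxation)
qed

end
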